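(* Let $k$ and $l'$ be positive integers with $l'<k$. If $\mathcal{F} \subseteq 2^{[n]}$ is an $(n-l')$-trace $k$-Sperner family, then $|\mathcal{F}| \le (k-l'+o(1))\binom{n}{\lfloor n/2\rfloor}$, where $o(1)$ denotes a quantity tending to $0$ as $n\to\infty$ with $k$ and $l'$ fixed.
   Context: $[n]=\{1,\dots,n\}$ and $2^{[n]}$ is the family of all subsets of $[n]$. A chain of length $m$ is a sequence of sets $F_1\subsetneq F_2\subsetneq\dots\subsetneq F_m$. A family is $k$-Sperner if it contains no chain of length $k+1$. For a set $F$ and a set $X$, the trace of $F$ on $X$ is $F\cap X$, and for a family $\mathcal{F}$, $\mathcal{F}|_X=\{F\cap X: F\in\mathcal{F}\}$. A family $\mathcal{F}\subseteq 2^{[n]}$ is $l$-trace $k$-Sperner if for every $l$-element subset $L\subseteq[n]$ the family $\mathcal{F}|_L$ is $k$-Sperner. *)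

theory Defs
  imports Complex_Main
begin

definition is_chain_in :: "'a set set \<Rightarrow> 'a set list \<Rightarrow> bool" where
  "is_chain_in G cs \<longleftrightarrow> set cs \<subseteq> G \<and> sorted_wrt (\<subset>) cs"

definition k_Sperner :: "nat \<Rightarrow> 'a set set \<Rightarrow> bool" where
  "k_Sperner k G \<longleftrightarrow> \<not> (\<exists>cs. is_chain_in G cs \<and> length cs = k + 1)"

definition trace :: "'a set set \<Rightarrow> 'a set \<Rightarrow> 'a set set" where
  "trace G X = (\<lambda>F. F \<inter> X) ` G"

definition trace_k_Sperner :: "nat \<Rightarrow> nat \<Rightarrow> nat \<Rightarrow> nat set set \<Rightarrow> bool" where
  "trace_k_Sperner n l k G \<longleftrightarrow>
     (\<forall>L. L \<subseteq> {1..n} \<and> card L = l \<longrightarrow> k_Sperner k (trace G L))"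

end

theory Submission
  imports Defs "HOL.Binomial_Plus"
begin

text \<open>Let \<open>l\<close> be the number of deleted points. For \<open>l = 0\<close> the family is itself \<open>k\<close>-Sperner,
  and the LYM inequality, applied to the \<open>k\<close> successive layers of minimal elements, bounds it by
  \<open>k\<cdot>binom n (n div 2)\<close>. For \<open>l = k = j\<close> the family is small: a \<open>j\<close>-uniform family with this
  trace property has no subfamily in which every shadow set lies below more than \<open>j\<close> members, so
  it is at most \<open>j\<close> times its shadow; double counting then bounds each level \<open>m \<le> n/2\<close> by
  \<open>j\<^sup>2 binom n m / (n - m + 1)\<close>, and with complements the whole family by \<open>O(2\<^sup>n / n)\<close>.
  In general, deleting a point \<open>x\<close> splits \<open>F\<close> into its projection, which has codimension
  \<open>l - 1\<close>, and the sets \<open>B\<close> with \<open>B, B \<union> {x} \<in> F\<close>, whose traces are \<open>(k - 1)\<close>-Sperner.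
  Induction gives \<open>|F| \<le> (k - l) binom n (n div 2) + O(2\<^sup>n / n)\<close>, and \<open>2\<^sup>n / n\<close> is
  \<open>o(binom n (n div 2))\<close>.\<close>

section \<open>Chains, traces and the LYM inequality\<close>

text \<open>Unlike \<open>trace_k_Sperner\<close>, the parameter \<open>l\<close> is the number of points removed from \<open>S\<close>,
  i.e. the codimension of the traces, and the ground set \<open>S\<close> is arbitrary.\<close>
definition trace_Sperner_on :: "'a set \<Rightarrow> nat \<Rightarrow> nat \<Rightarrow> 'a set set \<Rightarrow> bool" where
  "trace_Sperner_on S l k F \<longleftrightarrow>
     (\<forall>L. L \<subseteq> S \<and> card L = card S - l \<longrightarrow> k_Sperner k (trace F L))"

lemma k_Sperner_mono: "G \<subseteq> G' \<Longrightarrow> k_Sperner k G' \<Longrightarrow> k_Sperner k G"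
  unfolding k_Sperner_def is_chain_in_def by blast

lemma k_Sperner_0_empty: "k_Sperner 0 F \<Longrightarrow> F = {}"
proof (rule ccontr)
  assume "k_Sperner 0 F" "F \<noteq> {}"
  then obtain A where "is_chain_in F [A]" unfolding is_chain_in_def by auto
  with \<open>k_Sperner 0 F\<close> show False unfolding k_Sperner_def by fastforce
qed

lemma k_Sperner_strict_mono_map:
  assumes "k_Sperner k G'" and "\<And>X. X \<in> G \<Longrightarrow> f X \<in> G'"
    and "\<And>X Y. X \<in> G \<Longrightarrow> Y \<in> G \<Longrightarrow> X \<subset> Y \<Longrightarrow> f X \<subset> f Y"
  shows "k_Sperner k G"
  unfolding k_Sperner_def
proof
  assume "\<exists>cs. is_chain_in G cs \<and> length cs = k + 1"
  then obtain cs where cs: "is_chain_in G cs" "length cs = k + 1" by blast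
  have "sorted_wrt (\<subset>) cs" using cs(1) unfolding is_chain_in_def by blast
  then have "sorted_wrt (\<lambda>X Y. f X \<subset> f Y) cs"
  proof (rule sorted_wrt_mono_rel[rotated])
    fix X Y assume "X \<in> set cs" "Y \<in> set cs" "X \<subset> Y"
    moreover have "set cs \<subseteq> G" using cs(1) unfolding is_chain_in_def by blast
    ultimately show "f X \<subset> f Y" by (intro assms(3)) auto
  qed
  moreover have "set (map f cs) \<subseteq> G'" using cs(1) assms(2) unfolding is_chain_in_def by auto
  ultimately have "is_chain_in G' (map f cs)" unfolding is_chain_in_def
    by (simp add: sorted_wrt_map)
  moreover have "length (map f cs) = k + 1" using cs(2) by simp
  ultimately show False using assms(1) unfolding k_Sperner_def by blast
qed

lemma k_Sperner_strict_antimono_map: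
  assumes "k_Sperner k G'" and "\<And>X. X \<in> G \<Longrightarrow> f X \<in> G'"
    and "\<And>X Y. X \<in> G \<Longrightarrow> Y \<in> G \<Longrightarrow> X \<subset> Y \<Longrightarrow> f Y \<subset> f X"
  shows "k_Sperner k G"
  unfolding k_Sperner_def
proof
  assume "\<exists>cs. is_chain_in G cs \<and> length cs = k + 1"
  then obtain cs where cs: "is_chain_in G cs" "length cs = k + 1" by blast
  have "sorted_wrt (\<subset>) cs" using cs(1) unfolding is_chain_in_def by blast
  then have "sorted_wrt (\<lambda>X Y. f Y \<subset> f X) cs"
  proof (rule sorted_wrt_mono_rel[rotated])
    fix X Y assume "X \<in> set cs" "Y \<in> set cs" "X \<subset> Y"
    moreover have "set cs \<subseteq> G" using cs(1) unfolding is_chain_in_def by blast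
    ultimately show "f Y \<subset> f X" by (intro assms(3)) auto
  qed
  moreover have "set (map f (rev cs)) \<subseteq> G'" using cs(1) assms(2) unfolding is_chain_in_def by auto
  ultimately have "is_chain_in G' (map f (rev cs))" unfolding is_chain_in_def
    by (simp add: sorted_wrt_map sorted_wrt_rev)
  moreover have "length (map f (rev cs)) = k + 1" using cs(2) by simp
  ultimately show False using assms(1) unfolding k_Sperner_def by blast
qed

lemma sorted_wrt_psubset_le_last:
  "sorted_wrt (\<subset>) cs \<Longrightarrow> c \<in> set cs \<Longrightarrow> c \<subseteq> last cs"
proof (induction cs)
  case (Cons a cs)
  show ?case
  proof (cases "cs = []")
    case False
    then have "last cs \<in> set cs" by simp
    with Cons.prems have "a \<subset> last cs" by simp
    moreover have "c \<subseteq> last cs" if "c \<in> set cs" using Cons that by simp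
    ultimately show ?thesis using Cons.prems(2) False by auto
  qed (use Cons.prems in simp)
qed simp

lemma is_chain_in_snoc:
  assumes "is_chain_in G cs" "cs \<noteq> []" "last cs \<subset> X" "X \<in> G"
  shows "is_chain_in G (cs @ [X])"
  using assms sorted_wrt_psubset_le_last[of cs] unfolding is_chain_in_def
  by (auto simp: sorted_wrt_append)

lemma trace_mono: "G \<subseteq> G' \<Longrightarrow> trace G L \<subseteq> trace G' L"
  unfolding trace_def by blast

lemma trace_Sperner_on_mono: "G \<subseteq> G' \<Longrightarrow> trace_Sperner_on S l k G' \<Longrightarrow> trace_Sperner_on S l k G"
  unfolding trace_Sperner_on_def using k_Sperner_mono trace_mono by metis

lemma trace_Sperner_on_0_k_Sperner:
  assumes "F \<subseteq> Pow S" "trace_Sperner_on S 0 k F"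
  shows "k_Sperner k F"
proof -
  have "trace F S = F" using assms(1) unfolding trace_def by (auto simp: image_iff Int_absorb2)
  with assms(2) show ?thesis unfolding trace_Sperner_on_def by (metis diff_zero order_refl)
qed

definition antichain :: "'a set set \<Rightarrow> bool" where
  "antichain A \<longleftrightarrow> (\<forall>X\<in>A. \<forall>Y\<in>A. \<not> X \<subset> Y)"

definition lubell_sum :: "'a set \<Rightarrow> 'a set set \<Rightarrow> real" where
  "lubell_sum S A = (\<Sum>X\<in>A. 1 / real (card S choose card X))"

lemma card_div_choose_pred:
  assumes "0 < k" "k \<le> n"
  shows "real k / real (n - 1 choose (k - 1)) = real n / real (n choose k)"
proof -
  obtain i where k: "k = Suc i" using assms(1) by (cases k) auto
  have "real k * real (n choose k) = real n * real (n - 1 choose (k - 1))"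
    unfolding k using binomial_absorption[of i n] by (metis diff_Suc_1 of_nat_mult)
  moreover have "0 < n choose k" "0 < n - 1 choose (k - 1)" using assms by simp_all
  ultimately show ?thesis by (simp add: field_simps)
qed

lemma compl_card_div_choose:
  assumes "k < n"
  shows "real (n - k) / real (n - 1 choose k) = real n / real (n choose k)"
proof -
  have "real (n - k) * real (n choose k) = real n * real (n - 1 choose k)"
    using binomial_absorb_comp[of n k] by (metis of_nat_mult)
  moreover have "0 < n choose k" "0 < n - 1 choose k" using assms by simp_all
  ultimately show ?thesis by (simp add: field_simps)
qed

lemma sum_lubell_sum_link:
  assumes S: "finite S" and A: "A \<subseteq> Pow S" "{} \<notin> A"
  shows "(\<Sum>x\<in>S. lubell_sum (S - {x}) ((\<lambda>X. X - {x}) ` {X\<in>A. x \<in> X}))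
         = real (card S) * lubell_sum S A"
proof -
  define n where "n = card S"
  have "finite A" using S A(1) by (meson finite_Pow_iff finite_subset)
  have link: "lubell_sum (S - {x}) ((\<lambda>X. X - {x}) ` {X\<in>A. x \<in> X})
      = (\<Sum>X\<in>{X\<in>A. x \<in> X}. 1 / real (n - 1 choose (card X - 1)))" if "x \<in> S" for x
  proof -
    have "inj_on (\<lambda>X. X - {x}) {X\<in>A. x \<in> X}"
      by (rule inj_onI) (metis insert_Diff mem_Collect_eq)
    moreover have "card (X - {x}) = card X - 1" if "X \<in> A" "x \<in> X" for X
      using that A(1) S by (meson PowD card_Diff_singleton finite_subset subsetD)
    ultimately show ?thesis
      unfolding lubell_sum_def using that S by (simp add: sum.reindex n_def)
  qed
  have "(\<Sum>x\<in>S. lubell_sum (S - {x}) ((\<lambda>X. X - {x}) ` {X\<in>A. x \<in> X}))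
      = (\<Sum>x\<in>S. \<Sum>X\<in>{X\<in>A. x \<in> X}. 1 / real (n - 1 choose (card X - 1)))"
    using link by simp
  also have "\<dots> = (\<Sum>X\<in>A. \<Sum>x\<in>{x\<in>S. x \<in> X}. 1 / real (n - 1 choose (card X - 1)))"
    by (rule sum.swap_restrict[OF S \<open>finite A\<close>])
  also have "\<dots> = (\<Sum>X\<in>A. real (card X) / real (n - 1 choose (card X - 1)))"
  proof (rule sum.cong[OF refl])
    fix X assume "X \<in> A"
    then have "{x\<in>S. x \<in> X} = X" using A(1) by auto
    then show "(\<Sum>x\<in>{x\<in>S. x \<in> X}. 1 / real (n - 1 choose (card X - 1)))
        = real (card X) / real (n - 1 choose (card X - 1))" by simp
  qed
  also have "\<dots> = (\<Sum>X\<in>A. real n / real (n choose card X))"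
  proof (rule sum.cong[OF refl], rule card_div_choose_pred)
    fix X assume "X \<in> A"
    then have "X \<subseteq> S" "X \<noteq> {}" using A by auto
    moreover have "finite X" using \<open>X \<subseteq> S\<close> S by (rule finite_subset)
    ultimately show "0 < card X" "card X \<le> n"
      using S unfolding n_def by (simp_all add: card_gt_0_iff card_mono)
  qed
  finally show ?thesis unfolding lubell_sum_def n_def by (simp add: sum_distrib_left)
qed

lemma sum_lubell_sum_deletion:
  assumes S: "finite S" and A: "A \<subseteq> Pow S" "S \<notin> A"
  shows "(\<Sum>x\<in>S. lubell_sum (S - {x}) {X\<in>A. x \<notin> X}) = real (card S) * lubell_sum S A"
proof -
  define n where "n = card S"
  have "finite A" using S A(1) by (meson finite_Pow_iff finite_subset)
  have "(\<Sum>x\<in>S. lubell_sum (S - {x}) {X\<in>A. x \<notin> X})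
      = (\<Sum>x\<in>S. \<Sum>X\<in>{X\<in>A. x \<notin> X}. 1 / real (n - 1 choose card X))"
    unfolding lubell_sum_def n_def using S by simp
  also have "\<dots> = (\<Sum>X\<in>A. \<Sum>x\<in>{x\<in>S. x \<notin> X}. 1 / real (n - 1 choose card X))"
    by (rule sum.swap_restrict[OF S \<open>finite A\<close>])
  also have "\<dots> = (\<Sum>X\<in>A. real (n - card X) / real (n - 1 choose card X))"
  proof (rule sum.cong[OF refl])
    fix X assume "X \<in> A"
    then have "{x\<in>S. x \<notin> X} = S - X" "X \<subseteq> S" using A(1) by auto
    then show "(\<Sum>x\<in>{x\<in>S. x \<notin> X}. 1 / real (n - 1 choose card X))
        = real (n - card X) / real (n - 1 choose card X)"
      using S unfolding n_def by (simp add: card_Diff_subset finite_subset)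
  qed
  also have "\<dots> = (\<Sum>X\<in>A. real n / real (n choose card X))"
  proof (rule sum.cong[OF refl], rule compl_card_div_choose)
    fix X assume "X \<in> A"
    then have "X \<subset> S" using A by auto
    then show "card X < n" using S unfolding n_def by (simp add: psubset_card_mono)
  qed
  finally show ?thesis unfolding lubell_sum_def n_def by (simp add: sum_distrib_left)
qed

text \<open>Lubell's proof by induction on the ground set: summing the claim for the link and
  for the deletion of every point counts each member of \<open>A\<close> exactly \<open>2 |S|\<close> times.\<close>
theorem LYM_inequality:
  assumes "finite S" "A \<subseteq> Pow S" "antichain A"
  shows "lubell_sum S A \<le> 1"
  using assms
proof (induction "card S" arbitrary: S A rule: less_induct)
  case less
  note S = less.prems(1) and A = less.prems(2) and ac = less.prems(3)
  consider "{} \<in> A" | "S \<in> A" | "A = {}" | "{} \<notin> A" "S \<notin> A" "A \<noteq> {}" by blast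
  then show ?case
  proof cases
    case 1
    then have "A = {{}}" using ac unfolding antichain_def by blast
    then show ?thesis by (simp add: lubell_sum_def)
  next
    case 2
    then have "A = {S}" using ac A unfolding antichain_def by blast
    then show ?thesis by (simp add: lubell_sum_def)
  next
    case 3
    then show ?thesis by (simp add: lubell_sum_def)
  next
    case 4
    then have "S \<noteq> {}" using A by auto
    have IH: "lubell_sum (S - {x}) B \<le> 1"
      if "x \<in> S" "B \<subseteq> Pow (S - {x})" "antichain B" for x B
      using less.hyps[OF card_Diff1_less[OF S \<open>x \<in> S\<close>]] S that by blast
    have link: "lubell_sum (S - {x}) ((\<lambda>X. X - {x}) ` {X\<in>A. x \<in> X}) \<le> 1" if "x \<in> S" for x
    proof (rule IH[OF that])
      show "antichain ((\<lambda>X. X - {x}) ` {X\<in>A. x \<in> X})"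
        unfolding antichain_def
      proof (intro ballI notI)
        fix X' Y' assume "X' \<in> (\<lambda>X. X - {x}) ` {X\<in>A. x \<in> X}" "Y' \<in> (\<lambda>X. X - {x}) ` {X\<in>A. x \<in> X}"
          "X' \<subset> Y'"
        then obtain X Y where "X \<in> A" "Y \<in> A" "x \<in> X" "x \<in> Y" "X' = X - {x}" "Y' = Y - {x}"
          by blast
        with \<open>X' \<subset> Y'\<close> have "X \<subset> Y" by blast
        with ac \<open>X \<in> A\<close> \<open>Y \<in> A\<close> show False unfolding antichain_def by blast
      qed
    qed (use A in auto)
    have deletion: "lubell_sum (S - {x}) {X\<in>A. x \<notin> X} \<le> 1" if "x \<in> S" for x
    proof (rule IH[OF that])
      show "{X\<in>A. x \<notin> X} \<subseteq> Pow (S - {x})" using A by blast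
      show "antichain {X\<in>A. x \<notin> X}" using ac unfolding antichain_def by blast
    qed
    have "2 * real (card S) * lubell_sum S A
        = (\<Sum>x\<in>S. lubell_sum (S - {x}) ((\<lambda>X. X - {x}) ` {X\<in>A. x \<in> X})
                 + lubell_sum (S - {x}) {X\<in>A. x \<notin> X})"
      using sum_lubell_sum_link[OF S A \<open>{} \<notin> A\<close>] sum_lubell_sum_deletion[OF S A \<open>S \<notin> A\<close>]
      by (simp add: sum.distrib)
    also have "\<dots> \<le> (\<Sum>x\<in>S. 2)" by (rule sum_mono) (use link deletion in fastforce)
    finally have "2 * real (card S) * lubell_sum S A \<le> 2 * real (card S)" by simp
    moreover have "0 < 2 * real (card S)" using S \<open>S \<noteq> {}\<close> by (simp add: card_gt_0_iff)
    ultimately show ?thesis by (metis mult_le_cancel_left_pos mult.right_neutral)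
  qed
qed

lemma k_Sperner_non_minimal:
  assumes "k_Sperner (Suc k) F"
  shows "k_Sperner k {A\<in>F. \<exists>B\<in>F. B \<subset> A}"
  unfolding k_Sperner_def
proof
  assume "\<exists>cs. is_chain_in {A\<in>F. \<exists>B\<in>F. B \<subset> A} cs \<and> length cs = k + 1"
  then obtain cs where cs: "is_chain_in {A\<in>F. \<exists>B\<in>F. B \<subset> A} cs" "length cs = k + 1"
    by blast
  then obtain c cs' where c: "cs = c # cs'" by (cases cs) auto
  then obtain B where B: "B \<in> F" "B \<subset> c" using cs(1) unfolding is_chain_in_def by auto
  have "c \<subseteq> y" if "y \<in> set cs" for y
    using that cs(1) c unfolding is_chain_in_def by auto
  then have "is_chain_in F (B # cs)"
    using cs(1) B unfolding is_chain_in_def by (auto intro: psubset_subset_trans)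
  moreover have "length (B # cs) = Suc k + 1" using cs(2) by simp
  ultimately show False using assms unfolding k_Sperner_def by blast
qed

lemma lubell_sum_le_of_k_Sperner:
  assumes "finite S" "F \<subseteq> Pow S" "k_Sperner k F"
  shows "lubell_sum S F \<le> real k"
  using assms(2,3)
proof (induction k arbitrary: F)
  case 0
  then have "F = {}" by (intro k_Sperner_0_empty)
  then show ?case by (simp add: lubell_sum_def)
next
  case (Suc k)
  define N where "N = {A\<in>F. \<exists>B\<in>F. B \<subset> A}"
  have "finite F" using assms(1) Suc.prems(1) by (meson finite_Pow_iff finite_subset)
  have "lubell_sum S F = lubell_sum S (F - N) + lubell_sum S N"
    unfolding lubell_sum_def by (rule sum.subset_diff[OF _ \<open>finite F\<close>]) (auto simp: N_def)
  also have "\<dots> \<le> 1 + real k"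
  proof (rule add_mono)
    show "lubell_sum S N \<le> real k"
      using Suc.prems unfolding N_def by (intro Suc.IH k_Sperner_non_minimal) auto
    show "lubell_sum S (F - N) \<le> 1"
    proof (rule LYM_inequality[OF assms(1)])
      show "F - N \<subseteq> Pow S" using Suc.prems(1) by blast
      show "antichain (F - N)" unfolding N_def antichain_def by blast
    qed
  qed
  finally show ?case by simp
qed

lemma card_le_central_binomial_mult_lubell_sum:
  assumes "finite S" "F \<subseteq> Pow S"
  shows "real (card F) \<le> real (card S choose (card S div 2)) * lubell_sum S F"
proof -
  have "real (card F) = (\<Sum>A\<in>F. 1)" by simp
  also have "\<dots> \<le> (\<Sum>A\<in>F. real (card S choose (card S div 2)) / real (card S choose card A))"
  proof (rule sum_mono)
    fix A assume "A \<in> F"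
    then have "card A \<le> card S" using assms by (meson PowD card_mono subsetD)
    then have "0 < card S choose card A" by simp
    moreover have "real (card S choose card A) \<le> real (card S choose (card S div 2))"
      by (simp only: of_nat_le_iff binomial_maximum)
    ultimately show "1 \<le> real (card S choose (card S div 2)) / real (card S choose card A)"
      by (simp add: le_divide_eq)
  qed
  also have "\<dots> = real (card S choose (card S div 2)) * lubell_sum S F"
    unfolding lubell_sum_def by (simp add: sum_distrib_left)
  finally show ?thesis .
qed

lemma card_le_of_trace_Sperner_on_0:
  assumes "finite S" "F \<subseteq> Pow S" "trace_Sperner_on S 0 k F"
  shows "real (card F) \<le> real k * real (card S choose (card S div 2))"
proof -
  have "real (card F) \<le> real (card S choose (card S div 2)) * lubell_sum S F"
    by (rule card_le_central_binomial_mult_lubell_sum[OF assms(1,2)])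
  also have "\<dots> \<le> real (card S choose (card S div 2)) * real k"
    by (rule mult_left_mono, rule lubell_sum_le_of_k_Sperner[OF assms(1,2)],
        rule trace_Sperner_on_0_k_Sperner[OF assms(2,3)]) simp
  finally show ?thesis by (simp only: mult.commute)
qed

section \<open>Removing a point\<close>

lemma trace_Sperner_on_remove_point:
  assumes "finite S" "x \<in> S" "1 \<le> l" "trace_Sperner_on S l k F"
  shows "trace_Sperner_on (S - {x}) (l - 1) k ((\<lambda>A. A - {x}) ` F)"
  unfolding trace_Sperner_on_def
proof (intro allI impI)
  fix L assume L: "L \<subseteq> S - {x} \<and> card L = card (S - {x}) - (l - 1)"
  then have "card L = card S - l" using assms by simp
  with L have "k_Sperner k (trace F L)" using assms(4) unfolding trace_Sperner_on_def by blast
  moreover have "trace ((\<lambda>A. A - {x}) ` F) L = trace F L"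
    using L unfolding trace_def image_image by (intro image_cong) auto
  ultimately show "k_Sperner k (trace ((\<lambda>A. A - {x}) ` F) L)" by simp
qed

text \<open>A chain in the traces of the twins \<open>B\<close>, \<open>insert x B\<close> on \<open>L'\<close> extends by one set when
  \<open>x\<close> is added to the trace set.\<close>
lemma trace_Sperner_on_twins:
  assumes "finite S" "x \<in> S" "l < card S" "1 \<le> k" "trace_Sperner_on S l k F"
  shows "trace_Sperner_on (S - {x}) l (k - 1) {B\<in>F. x \<notin> B \<and> insert x B \<in> F}"
  unfolding trace_Sperner_on_def
proof (intro allI impI)
  define P where "P = {B\<in>F. x \<notin> B \<and> insert x B \<in> F}"
  fix L' assume L': "L' \<subseteq> S - {x} \<and> card L' = card (S - {x}) - l"
  define L where "L = insert x L'"
  have "finite L'" "x \<notin> L'" using L' assms(1) by (auto intro: finite_subset)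
  then have "card L = card S - l" "L \<subseteq> S"
    using L' assms(1-3) unfolding L_def by auto
  then have Sperner: "k_Sperner k (trace F L)"
    using assms(5) unfolding trace_Sperner_on_def by blast
  show "k_Sperner (k - 1) (trace P L')"
    unfolding k_Sperner_def
  proof
    assume "\<exists>cs. is_chain_in (trace P L') cs \<and> length cs = k - 1 + 1"
    then obtain cs where cs: "is_chain_in (trace P L') cs" "length cs = k" using assms(4) by auto
    have "cs \<noteq> []" using cs assms(4) by auto
    have "trace P L' \<subseteq> trace F L"
      unfolding trace_def P_def L_def using L' by blast
    with cs(1) have chain: "is_chain_in (trace F L) cs" unfolding is_chain_in_def by blast
    have "last cs \<in> trace P L'" using cs(1) \<open>cs \<noteq> []\<close> unfolding is_chain_in_def by auto
    then obtain B where B: "B \<in> P" "last cs = B \<inter> L'" unfolding trace_def by auto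
    then have "insert x (last cs) = insert x B \<inter> L" "insert x B \<in> F"
      unfolding L_def P_def by auto
    then have "insert x (last cs) \<in> trace F L" unfolding trace_def by blast
    moreover have "last cs \<subset> insert x (last cs)" using B L' by blast
    ultimately have "is_chain_in (trace F L) (cs @ [insert x (last cs)])"
      using is_chain_in_snoc[OF chain \<open>cs \<noteq> []\<close>] by blast
    moreover have "length (cs @ [insert x (last cs)]) = k + 1" using cs by simp
    ultimately show False using Sperner unfolding k_Sperner_def by blast
  qed
qed

lemma card_le_card_remove_point_plus_twins:
  assumes "finite F"
  shows "card F \<le> card ((\<lambda>A. A - {x}) ` F) + card {B\<in>F. x \<notin> B \<and> insert x B \<in> F}"
proof -
  define F0 where "F0 = {A\<in>F. x \<notin> A}"
  define F1 where "F1 = {A\<in>F. x \<in> A}"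
  have fin0: "finite F0" and fin1: "finite F1" using assms unfolding F0_def F1_def by auto
  have "card F = card F0 + card F1"
  proof -
    have "F = F0 \<union> F1" "F0 \<inter> F1 = {}" unfolding F0_def F1_def by auto
    then show ?thesis using card_Un_disjoint fin0 fin1 by metis
  qed
  moreover have inj: "inj_on (\<lambda>A. A - {x}) F1"
    by (rule inj_onI) (metis F1_def insert_Diff mem_Collect_eq)
  then have "card ((\<lambda>A. A - {x}) ` F1) = card F1" by (rule card_image)
  moreover have "card ((\<lambda>A. A - {x}) ` F) = card (F0 \<union> (\<lambda>A. A - {x}) ` F1)"
  proof -
    have "(\<lambda>A. A - {x}) ` F = (\<lambda>A. A - {x}) ` F0 \<union> (\<lambda>A. A - {x}) ` F1"
      unfolding F0_def F1_def by blast
    moreover have "(\<lambda>A. A - {x}) ` F0 = F0" unfolding F0_def by force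
    ultimately show ?thesis by (simp add: image_Un)
  qed
  moreover have "card (F0 \<union> (\<lambda>A. A - {x}) ` F1) + card (F0 \<inter> (\<lambda>A. A - {x}) ` F1) = card F0 + card ((\<lambda>A. A - {x}) ` F1)"
    using card_Un_Int[of F0 "(\<lambda>A. A - {x}) ` F1"] fin0 fin1 by simp
  moreover have "card (F0 \<inter> (\<lambda>A. A - {x}) ` F1) \<le> card {B\<in>F. x \<notin> B \<and> insert x B \<in> F}"
  proof (rule card_mono)
    show "finite {B\<in>F. x \<notin> B \<and> insert x B \<in> F}" using assms by auto
    show "F0 \<inter> (\<lambda>A. A - {x}) ` F1 \<subseteq> {B\<in>F. x \<notin> B \<and> insert x B \<in> F}"
    proof
      fix B assume "B \<in> F0 \<inter> (\<lambda>A. A - {x}) ` F1"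
      then obtain A where A: "B \<in> F" "x \<notin> B" "A \<in> F" "x \<in> A" "B = A - {x}"
        unfolding F0_def F1_def by blast
      then have "insert x B = A" by blast
      then show "B \<in> {B\<in>F. x \<notin> B \<and> insert x B \<in> F}" using A by blast
    qed
  qed
  ultimately show ?thesis by linarith
qed

section \<open>Uniform families\<close>

definition rich_family :: "nat \<Rightarrow> 'a set set \<Rightarrow> bool" where
  "rich_family j H \<longleftrightarrow> H \<noteq> {} \<and> (\<forall>A\<in>H. \<forall>x\<in>A. j < card {B\<in>H. A - {x} \<subseteq> B})"

definition shadow :: "'a set set \<Rightarrow> 'a set set" where
  "shadow H = {A - {x} | A x. A \<in> H \<and> x \<in> A}"

lemma finite_shadow:
  assumes "finite H" "\<forall>A\<in>H. finite A"
  shows "finite (shadow H)"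
proof (rule finite_subset)
  show "shadow H \<subseteq> (\<Union>A\<in>H. (\<lambda>x. A - {x}) ` A)" unfolding shadow_def by blast
qed (use assms in simp)

text \<open>Peeling: a family without rich subfamilies has a shadow set \<open>D\<close> lying below at most
  \<open>j\<close> members; deleting these members removes \<open>D\<close> from the shadow.\<close>
lemma card_le_mult_card_shadow:
  assumes "finite H" "\<forall>A\<in>H. finite A" "\<forall>H'\<subseteq>H. \<not> rich_family j H'"
  shows "card H \<le> j * card (shadow H)"
  using assms
proof (induction "card H" arbitrary: H rule: less_induct)
  case less
  show ?case
  proof (cases "H = {}")
    case False
    moreover have "\<not> rich_family j H" using less.prems(3) by blast
    ultimately obtain A x where Ax: "A \<in> H" "x \<in> A" "card {B\<in>H. A - {x} \<subseteq> B} \<le> j"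
      unfolding rich_family_def by (auto simp: not_less)
    define R where "R = {B\<in>H. A - {x} \<subseteq> B}"
    have "R \<subseteq> H" "A \<in> R" unfolding R_def using Ax by auto
    have "finite R" using \<open>R \<subseteq> H\<close> less.prems(1) by (rule finite_subset)
    have "H - R \<subset> H" using \<open>R \<subseteq> H\<close> \<open>A \<in> R\<close> by blast
    then have IH: "card (H - R) \<le> j * card (shadow (H - R))"
      by (intro less.hyps psubset_card_mono) (use less.prems in auto)
    have "A - {x} \<in> shadow H" unfolding shadow_def using Ax by blast
    have "finite (shadow H)" using finite_shadow less.prems by blast
    have "shadow (H - R) \<subseteq> shadow H - {A - {x}}"
      unfolding shadow_def R_def by blast
    then have "card (shadow (H - R)) \<le> card (shadow H - {A - {x}})"
      using \<open>finite (shadow H)\<close> by (intro card_mono) auto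
    also have "\<dots> = card (shadow H) - 1"
      using \<open>A - {x} \<in> shadow H\<close> by (rule card_Diff_singleton)
    finally have "j * card (shadow (H - R)) \<le> j * (card (shadow H) - 1)" by simp
    moreover have "card (shadow H) \<ge> 1"
      using \<open>A - {x} \<in> shadow H\<close> \<open>finite (shadow H)\<close> by (simp add: Suc_le_eq card_gt_0_iff) blast
    moreover have "card H = card (H - R) + card R"
      using \<open>R \<subseteq> H\<close> \<open>finite R\<close> less.prems(1) by (simp add: card_Diff_subset card_mono)
    ultimately have "card H \<le> j * (card (shadow H) - 1) + j"
      using IH Ax(3) unfolding R_def by linarith
    also have "\<dots> = j * card (shadow H)"
      using \<open>card (shadow H) \<ge> 1\<close> by (cases "card (shadow H)") simp_all
    finally show ?thesis .
  qed simp
qed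

lemma rich_family_exchange:
  assumes rich: "rich_family j H" and H: "\<forall>B\<in>H. finite B \<and> card B = j"
    and "A \<in> H" "x \<in> A" "x \<in> Y" "finite Y" "card Y \<le> j"
  shows "\<exists>y. y \<notin> Y \<and> y \<notin> A \<and> insert y (A - {x}) \<in> H"
proof (rule ccontr)
  assume none: "\<nexists>y. y \<notin> Y \<and> y \<notin> A \<and> insert y (A - {x}) \<in> H"
  define D where "D = A - {x}"
  have "finite A" "card A = j" using H \<open>A \<in> H\<close> by auto
  moreover have "card A > 0" using \<open>x \<in> A\<close> \<open>finite A\<close> card_gt_0_iff by blast
  ultimately have "finite D" "card D + 1 = j" unfolding D_def using \<open>x \<in> A\<close> by auto
  have "{B\<in>H. D \<subseteq> B} \<subseteq> (\<lambda>y. insert y D) ` Y"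
  proof
    fix B assume B: "B \<in> {B\<in>H. D \<subseteq> B}"
    then have "finite B" "card B = j" "D \<subseteq> B" using H by auto
    moreover have "D \<noteq> B" using \<open>card B = j\<close> \<open>card D + 1 = j\<close> by auto
    ultimately obtain y where "y \<in> B" "y \<notin> D" by blast
    then have "insert y D \<subseteq> B" "card (insert y D) = card B"
      using \<open>D \<subseteq> B\<close> \<open>finite D\<close> \<open>card D + 1 = j\<close> \<open>card B = j\<close> by auto
    then have "B = insert y D" using \<open>finite B\<close> card_subset_eq by blast
    then show "B \<in> (\<lambda>y. insert y D) ` Y"
      using none B \<open>y \<notin> D\<close> \<open>x \<in> Y\<close> unfolding D_def by blast
  qed
  then have "card {B\<in>H. D \<subseteq> B} \<le> card ((\<lambda>y. insert y D) ` Y)"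
    using \<open>finite Y\<close> by (intro card_mono) auto
  also have "\<dots> \<le> card Y" by (rule card_image_le[OF \<open>finite Y\<close>])
  finally have "card {B\<in>H. D \<subseteq> B} \<le> card Y" .
  moreover have "j < card {B\<in>H. D \<subseteq> B}"
    using rich \<open>A \<in> H\<close> \<open>x \<in> A\<close> unfolding rich_family_def D_def by blast
  ultimately show False using \<open>card Y \<le> j\<close> by simp
qed

text \<open>With \<open>A\<^sub>0 \<in> H\<close> and \<open>L = T - A\<^sub>0\<close>, repeated exchanges inside \<open>A\<^sub>0\<close> move a member of \<open>H\<close>
  one point at a time out of \<open>A\<^sub>0\<close>, and their traces on \<open>L\<close> form a chain of length \<open>j + 1\<close>.\<close>
lemma rich_family_not_trace_Sperner_on:
  assumes T: "finite T" and H: "H \<subseteq> {A. A \<subseteq> T \<and> card A = j}" and rich: "rich_family j H"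
  shows "\<not> trace_Sperner_on T j j H"
proof
  assume Sperner: "trace_Sperner_on T j j H"
  have H': "\<forall>B\<in>H. finite B \<and> card B = j" using H T by (auto intro: finite_subset)
  have "H \<noteq> {}" using rich by (simp add: rich_family_def)
  then obtain A0 where A0: "A0 \<in> H" by blast
  then have "A0 \<subseteq> T" "card A0 = j" using H by auto
  have "finite A0" using \<open>A0 \<subseteq> T\<close> T by (rule finite_subset)
  define L where "L = T - A0"
  have chain: "\<exists>A\<in>H. card (A \<inter> L) = i
      \<and> (\<exists>cs. is_chain_in (trace H L) cs \<and> length cs = Suc i \<and> last cs = A \<inter> L)"
    if "i \<le> j" for i
    using that
  proof (induction i)
    case 0
    have "A0 \<inter> L = {}" unfolding L_def by blast
    moreover have "is_chain_in (trace H L) [A0 \<inter> L]"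
      using A0 unfolding is_chain_in_def trace_def by simp
    ultimately show ?case using A0 by (intro bexI[of _ A0]) (auto intro!: exI[of _ "[A0 \<inter> L]"])
  next
    case (Suc i)
    then obtain A cs where A: "A \<in> H" "card (A \<inter> L) = i"
      and cs: "is_chain_in (trace H L) cs" "length cs = Suc i" "last cs = A \<inter> L"
      by auto
    have "A \<subseteq> T" "card A = j" "finite A" using A(1) H H' by auto
    moreover have "A = (A \<inter> A0) \<union> (A \<inter> L)" "(A \<inter> A0) \<inter> (A \<inter> L) = {}"
      using \<open>A \<subseteq> T\<close> unfolding L_def by blast+
    ultimately have "card (A \<inter> A0) + card (A \<inter> L) = j"
      by (metis card_Un_disjoint finite_Int)
    then have "A \<inter> A0 \<noteq> {}" using Suc.prems A(2) by auto
    then obtain x where x: "x \<in> A" "x \<in> A0" by blast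
    obtain y where y: "y \<notin> A0" "y \<notin> A" "insert y (A - {x}) \<in> H"
      using rich_family_exchange[OF rich H' A(1) x \<open>finite A0\<close>] \<open>card A0 = j\<close> by blast
    define B where "B = insert y (A - {x})"
    have "y \<in> T" using y H unfolding B_def by blast
    then have "B \<inter> L = insert y (A \<inter> L)" "y \<notin> A \<inter> L"
      using x y unfolding B_def L_def by auto
    then have "last cs \<subset> B \<inter> L" using cs(3) by blast
    moreover have "B \<inter> L \<in> trace H L" using y(3) unfolding trace_def B_def by blast
    moreover have "cs \<noteq> []" using cs(2) by auto
    ultimately have "is_chain_in (trace H L) (cs @ [B \<inter> L])"
      using is_chain_in_snoc[OF cs(1)] by blast
    moreover have "card (B \<inter> L) = Suc i"
      using \<open>B \<inter> L = insert y (A \<inter> L)\<close> \<open>y \<notin> A \<inter> L\<close> \<open>finite A\<close> A(2) by simp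
    moreover have "length (cs @ [B \<inter> L]) = Suc (Suc i)" using cs(2) by simp
    ultimately show ?case using y(3) unfolding B_def by (intro bexI[of _ B]) (auto simp: B_def)
  qed
  obtain cs where "is_chain_in (trace H L) cs" "length cs = j + 1" using chain[of j] by auto
  moreover have "k_Sperner j (trace H L)"
    using Sperner \<open>A0 \<subseteq> T\<close> \<open>card A0 = j\<close> \<open>finite A0\<close> T
    unfolding trace_Sperner_on_def L_def by (simp add: card_Diff_subset)
  ultimately show False unfolding k_Sperner_def by blast
qed

lemma card_uniform_le_of_trace_Sperner_on:
  assumes T: "finite T" and H: "H \<subseteq> {A. A \<subseteq> T \<and> card A = j}" and "trace_Sperner_on T j j H"
  shows "card H \<le> j * (card T choose (j - 1))"
proof -
  have "H \<subseteq> Pow T" using H by blast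
  then have "finite H" using T by (simp add: finite_subset)
  have H': "\<forall>A\<in>H. finite A" using H T by (auto intro: finite_subset)
  have "\<forall>H'\<subseteq>H. \<not> rich_family j H'"
  proof (intro allI impI)
    fix H' assume "H' \<subseteq> H"
    then have "trace_Sperner_on T j j H'" by (rule trace_Sperner_on_mono[OF _ assms(3)])
    moreover have "H' \<subseteq> {A. A \<subseteq> T \<and> card A = j}" using \<open>H' \<subseteq> H\<close> H by blast
    ultimately show "\<not> rich_family j H'" using rich_family_not_trace_Sperner_on[OF T] by blast
  qed
  then have "card H \<le> j * card (shadow H)" by (rule card_le_mult_card_shadow[OF \<open>finite H\<close> H'])
  also have "card (shadow H) \<le> card {D. D \<subseteq> T \<and> card D = j - 1}"
  proof (rule card_mono)
    show "shadow H \<subseteq> {D. D \<subseteq> T \<and> card D = j - 1}"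
      unfolding shadow_def using H H' by auto
  qed (use T in simp)
  finally show ?thesis using n_subsets[OF T] by simp
qed

lemma trace_Sperner_on_supersets_diff:
  assumes S: "finite S" and K: "K \<subseteq> S" "l + card K \<le> card S"
    and Sperner: "trace_Sperner_on S l k G"
  shows "trace_Sperner_on (S - K) l k ((\<lambda>A. A - K) ` {A\<in>G. K \<subseteq> A})"
  unfolding trace_Sperner_on_def
proof (intro allI impI)
  fix L' assume L': "L' \<subseteq> S - K \<and> card L' = card (S - K) - l"
  have "finite K" "finite L'" using S K L' by (auto intro: finite_subset)
  moreover have "L' \<inter> K = {}" using L' by blast
  ultimately have "card (L' \<union> K) = card L' + card K" by (simp add: card_Un_disjoint)
  then have "card (L' \<union> K) = card S - l"
    using L' K \<open>finite K\<close> by (simp add: card_Diff_subset)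
  moreover have "L' \<union> K \<subseteq> S" using L' K by blast
  ultimately have "k_Sperner k (trace G (L' \<union> K))"
    using Sperner unfolding trace_Sperner_on_def by blast
  then show "k_Sperner k (trace ((\<lambda>A. A - K) ` {A\<in>G. K \<subseteq> A}) L')"
  proof (rule k_Sperner_strict_mono_map[where f = "\<lambda>X. X \<union> K"])
    fix X assume "X \<in> trace ((\<lambda>A. A - K) ` {A\<in>G. K \<subseteq> A}) L'"
    then obtain A where "A \<in> G" "K \<subseteq> A" "X = (A - K) \<inter> L'" unfolding trace_def by blast
    then have "X \<union> K = A \<inter> (L' \<union> K)" by blast
    with \<open>A \<in> G\<close> show "X \<union> K \<in> trace G (L' \<union> K)" unfolding trace_def by blast
  next
    fix X Y assume "X \<in> trace ((\<lambda>A. A - K) ` {A\<in>G. K \<subseteq> A}) L'" "X \<subset> Y"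
      "Y \<in> trace ((\<lambda>A. A - K) ` {A\<in>G. K \<subseteq> A}) L'"
    then show "X \<union> K \<subset> Y \<union> K" using L' unfolding trace_def by blast
  qed
qed

lemma sum_card_supersets:
  assumes S: "finite S" and G: "G \<subseteq> {A. A \<subseteq> S \<and> card A = m}"
  shows "(\<Sum>K\<in>{K. K \<subseteq> S \<and> card K = i}. card {A\<in>G. K \<subseteq> A}) = card G * (m choose i)"
proof -
  have "finite G" using S G by (simp add: finite_subset)
  have "(\<Sum>K\<in>{K. K \<subseteq> S \<and> card K = i}. card {A\<in>G. K \<subseteq> A})
      = (\<Sum>K\<in>{K. K \<subseteq> S \<and> card K = i}. \<Sum>A\<in>{A\<in>G. K \<subseteq> A}. 1)" by simp
  also have "\<dots> = (\<Sum>A\<in>G. \<Sum>K\<in>{K\<in>{K. K \<subseteq> S \<and> card K = i}. K \<subseteq> A}. 1)"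
    by (rule sum.swap_restrict) (use S \<open>finite G\<close> in simp_all)
  also have "\<dots> = (\<Sum>A\<in>G. m choose i)"
  proof (rule sum.cong[OF refl])
    fix A assume "A \<in> G"
    then have "A \<subseteq> S" "card A = m" "finite A" using G S by (auto intro: finite_subset)
    moreover have "{K\<in>{K. K \<subseteq> S \<and> card K = i}. K \<subseteq> A} = {K. K \<subseteq> A \<and> card K = i}"
      using \<open>A \<subseteq> S\<close> by blast
    ultimately show "(\<Sum>K\<in>{K\<in>{K. K \<subseteq> S \<and> card K = i}. K \<subseteq> A}. 1) = m choose i"
      using n_subsets[OF \<open>finite A\<close>] by simp
  qed
  finally show ?thesis by simp
qed

lemma card_supersets_le_of_trace_Sperner_on:
  assumes S: "finite S" and G: "G \<subseteq> {A. A \<subseteq> S \<and> card A = m}" and "j \<le> m" "m \<le> card S"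
    and Sperner: "trace_Sperner_on S j j G" and K: "K \<subseteq> S" "card K = m - j"
  shows "card {A\<in>G. K \<subseteq> A} \<le> j * ((card S - m + j) choose (j - 1))"
proof -
  have "finite K" using K S by (auto intro: finite_subset)
  have "inj_on (\<lambda>A. A - K) {A\<in>G. K \<subseteq> A}"
    by (rule inj_onI) (metis (no_types, lifting) Un_Diff_cancel2 mem_Collect_eq sup.absorb1)
  then have "card {A\<in>G. K \<subseteq> A} = card ((\<lambda>A. A - K) ` {A\<in>G. K \<subseteq> A})"
    by (simp add: card_image)
  also have "\<dots> \<le> j * (card (S - K) choose (j - 1))"
  proof (rule card_uniform_le_of_trace_Sperner_on)
    show "(\<lambda>A. A - K) ` {A\<in>G. K \<subseteq> A} \<subseteq> {B. B \<subseteq> S - K \<and> card B = j}"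
      using G \<open>finite K\<close> K \<open>j \<le> m\<close> by (auto simp: card_Diff_subset)
    show "trace_Sperner_on (S - K) j j ((\<lambda>A. A - K) ` {A\<in>G. K \<subseteq> A})"
      using K assms(3,4) by (intro trace_Sperner_on_supersets_diff[OF S _ _ Sperner]) auto
  qed (use S in simp)
  also have "card (S - K) = card S - m + j"
    using K assms(3,4) \<open>finite K\<close> by (simp add: card_Diff_subset)
  finally show ?thesis .
qed

text \<open>Double counting the pairs \<open>K \<subseteq> A\<close> with \<open>A \<in> G\<close> and \<open>|K| = m - j\<close>.\<close>
lemma card_level_le_of_trace_Sperner_on:
  assumes S: "finite S" and G: "G \<subseteq> {A. A \<subseteq> S \<and> card A = m}"
    and "1 \<le> j" "j \<le> m" "m \<le> card S" and Sperner: "trace_Sperner_on S j j G"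
  shows "card G * (card S - m + 1) \<le> j * j * (card S choose m)"
proof -
  define n where "n = card S"
  define N where "N = n - m + j"
  have "card G * (m choose (m - j))
      = (\<Sum>K\<in>{K. K \<subseteq> S \<and> card K = m - j}. card {A\<in>G. K \<subseteq> A})"
    by (rule sum_card_supersets[OF S G, symmetric])
  also have "\<dots> \<le> (\<Sum>K\<in>{K. K \<subseteq> S \<and> card K = m - j}. j * (N choose (j - 1)))"
    by (rule sum_mono, unfold N_def n_def)
      (use card_supersets_le_of_trace_Sperner_on[OF S G assms(4,5) Sperner] in auto)
  also have "\<dots> = (n choose (m - j)) * (j * (N choose (j - 1)))"
    using n_subsets[OF S] unfolding n_def by simp
  finally have count: "card G * (m choose (m - j)) \<le> (n choose (m - j)) * (j * (N choose (j - 1)))" .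
  obtain i where j: "j = Suc i" using assms(3) by (cases j) auto
  have e1: "(N choose (j - 1)) * (n - m + 1) = j * (N choose j)"
    using binomial_absorption[of i N] binomial_absorb_comp[of N i]
    unfolding j N_def by (simp add: mult.commute)
  have e2: "(n choose m) * (m choose (m - j)) = (n choose (m - j)) * (N choose j)"
    using choose_mult[of "m - j" m n] assms(4,5) unfolding N_def n_def by simp
  have "card G * (m choose (m - j)) * (n - m + 1)
      \<le> (n choose (m - j)) * (j * (N choose (j - 1))) * (n - m + 1)"
    by (rule mult_le_mono1[OF count])
  also have "\<dots> = j * ((n choose (m - j)) * ((N choose (j - 1)) * (n - m + 1)))"
    by (simp only: mult_ac)
  also have "\<dots> = j * j * ((n choose m) * (m choose (m - j)))"
    unfolding e1 e2 by (simp only: mult_ac)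
  finally have "(card G * (n - m + 1)) * (m choose (m - j)) \<le> (j * j * (n choose m)) * (m choose (m - j))"
    by (simp only: mult_ac)
  then show ?thesis unfolding n_def by simp
qed

section \<open>Families whose traces of codimension \<open>j\<close> are \<open>j\<close>-Sperner\<close>

lemma binomial_le_binomial_Suc:
  assumes "m < j" "2 * j \<le> n"
  shows "real (n choose m) \<le> 2 * real j * real (n choose Suc m) / real n"
proof -
  have "real (n - m) * real (n choose m) = real (Suc m) * real (n choose Suc m)"
    using binomial_absorption[of m n] binomial_absorb_comp[of n m] by (metis of_nat_mult)
  moreover have "real n / 2 \<le> real (n - m)" using assms by (simp add: of_nat_diff)
  ultimately have "real n / 2 * real (n choose m) \<le> real (Suc m) * real (n choose Suc m)"
    by (metis mult_right_mono of_nat_0_le_iff)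
  also have "\<dots> \<le> real j * real (n choose Suc m)"
    by (rule mult_right_mono) (use assms in simp_all)
  finally show ?thesis using assms by (simp add: field_simps)
qed

lemma card_level_le_lower_half:
  assumes S: "finite S" and G: "G \<subseteq> Pow S" and "1 \<le> j" "2 * j \<le> card S" "2 * m \<le> card S"
    and Sperner: "trace_Sperner_on S j j G"
  shows "real (card {A\<in>G. card A = m})
    \<le> (2 * real j + 2 * real j * real j) / real (card S) * real (Suc (card S) choose Suc m)"
proof -
  define n where "n = card S"
  define c where "c = (2 * real j + 2 * real j * real j) / real n"
  have "n > 0" using assms unfolding n_def by simp
  have Gm: "{A\<in>G. card A = m} \<subseteq> {A. A \<subseteq> S \<and> card A = m}" using G by blast
  have "c \<ge> 0" unfolding c_def by simp
  have "real (card {A\<in>G. card A = m}) \<le> c * (real (n choose m) + real (n choose Suc m))"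
  proof (cases "m < j")
    case True
    have "card {A\<in>G. card A = m} \<le> n choose m"
      using card_mono[OF _ Gm] n_subsets[OF S] S unfolding n_def by simp
    then have "real (card {A\<in>G. card A = m}) \<le> 2 * real j * real (n choose Suc m) / real n"
      using binomial_le_binomial_Suc[OF True, of n] assms(4) unfolding n_def by linarith
    also have "\<dots> \<le> c * real (n choose Suc m)"
      unfolding c_def using \<open>n > 0\<close> by (simp add: field_simps)
    also have "\<dots> \<le> c * (real (n choose m) + real (n choose Suc m))"
      by (rule mult_left_mono) (use \<open>c \<ge> 0\<close> in simp_all)
    finally show ?thesis .
  next
    case False
    have "card {A\<in>G. card A = m} * (n - m + 1) \<le> j * j * (n choose m)"
      unfolding n_def using assms False
      by (intro card_level_le_of_trace_Sperner_on[OF S Gm])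
        (auto intro: trace_Sperner_on_mono[OF _ Sperner])
    then have level: "real (card {A\<in>G. card A = m}) * real (n - m + 1) \<le> real j * real j * real (n choose m)"
      by (simp only: of_nat_mult[symmetric] of_nat_le_iff)
    have "real n \<le> 2 * real (n - m + 1)"
      using assms(5) unfolding n_def by (simp add: of_nat_diff)
    then have "real (card {A\<in>G. card A = m}) * real n
        \<le> real (card {A\<in>G. card A = m}) * (2 * real (n - m + 1))"
      by (rule mult_left_mono) simp
    also have "\<dots> = 2 * (real (card {A\<in>G. card A = m}) * real (n - m + 1))" by simp
    also have "\<dots> \<le> 2 * (real j * real j * real (n choose m))" using level by simp
    finally have "real (card {A\<in>G. card A = m}) * real n \<le> 2 * (real j * real j * real (n choose m))" .
    then have "real (card {A\<in>G. card A = m}) \<le> c * real (n choose m)"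
      unfolding c_def using \<open>n > 0\<close> by (simp add: field_simps add_increasing)
    also have "\<dots> \<le> c * (real (n choose m) + real (n choose Suc m))"
      by (rule mult_left_mono) (use \<open>c \<ge> 0\<close> in simp_all)
    finally show ?thesis .
  qed
  then show ?thesis unfolding c_def n_def by simp
qed

lemma sum_binomial_Suc_le:
  assumes "h \<le> n"
  shows "(\<Sum>m\<le>h. real (Suc n choose Suc m)) \<le> 2 ^ Suc n"
proof -
  have "(\<Sum>m\<le>h. real (Suc n choose Suc m)) = (\<Sum>k\<in>Suc ` {..h}. real (Suc n choose k))"
    by (simp add: sum.reindex)
  also have "\<dots> \<le> (\<Sum>k\<le>Suc n. real (Suc n choose k))"
    by (rule sum_mono2) (use assms in auto)
  also have "\<dots> = 2 ^ Suc n"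
    using choose_row_sum[of "Suc n"] by (metis of_nat_numeral of_nat_power of_nat_sum)
  finally show ?thesis .
qed

lemma card_lower_half_le:
  assumes S: "finite S" and G: "G \<subseteq> Pow S" and "1 \<le> j" "2 * j \<le> card S"
    and Sperner: "trace_Sperner_on S j j G"
  shows "real (card {A\<in>G. 2 * card A \<le> card S})
    \<le> (2 * real j + 2 * real j * real j) / real (card S) * 2 ^ Suc (card S)"
proof -
  define n where "n = card S"
  define c where "c = (2 * real j + 2 * real j * real j) / real n"
  have "finite G" using G S by (meson finite_Pow_iff finite_subset)
  have "{A\<in>G. 2 * card A \<le> n} = (\<Union>m\<le>n div 2. {A\<in>G. card A = m})" by auto
  then have "card {A\<in>G. 2 * card A \<le> n} = (\<Sum>m\<le>n div 2. card {A\<in>G. card A = m})"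
    using \<open>finite G\<close> by (simp add: card_UN_disjoint disjoint_iff)
  then have "real (card {A\<in>G. 2 * card A \<le> n}) = (\<Sum>m\<le>n div 2. real (card {A\<in>G. card A = m}))"
    by simp
  also have "\<dots> \<le> (\<Sum>m\<le>n div 2. c * real (Suc n choose Suc m))"
    unfolding c_def n_def
    by (rule sum_mono, rule card_level_le_lower_half[OF S G assms(3,4) _ Sperner]) auto
  also have "\<dots> = c * (\<Sum>m\<le>n div 2. real (Suc n choose Suc m))"
    by (simp add: sum_distrib_left)
  also have "\<dots> \<le> c * 2 ^ Suc n"
    by (rule mult_left_mono[OF sum_binomial_Suc_le]) (simp_all add: c_def)
  finally show ?thesis unfolding c_def n_def .
qed

lemma trace_Sperner_on_complements:
  assumes "trace_Sperner_on S l k G"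
  shows "trace_Sperner_on S l k ((\<lambda>A. S - A) ` G)"
  unfolding trace_Sperner_on_def
proof (intro allI impI)
  fix L assume L: "L \<subseteq> S \<and> card L = card S - l"
  then have "k_Sperner k (trace G L)" using assms unfolding trace_Sperner_on_def by blast
  then show "k_Sperner k (trace ((\<lambda>A. S - A) ` G) L)"
  proof (rule k_Sperner_strict_antimono_map[where f = "\<lambda>X. L - X"])
    fix X assume "X \<in> trace ((\<lambda>A. S - A) ` G) L"
    then obtain A where "A \<in> G" "X = (S - A) \<inter> L" unfolding trace_def by blast
    then have "L - X = A \<inter> L" using L by blast
    with \<open>A \<in> G\<close> show "L - X \<in> trace G L" unfolding trace_def by blast
  next
    fix X Y assume "X \<in> trace ((\<lambda>A. S - A) ` G) L" "X \<subset> Y"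
      "Y \<in> trace ((\<lambda>A. S - A) ` G) L"
    then show "L - Y \<subset> L - X" unfolding trace_def by blast
  qed
qed

text \<open>Complementation maps the upper half of \<open>G\<close> injectively into the lower half of a family
  with the same trace property.\<close>
lemma card_le_of_trace_Sperner_on_diag:
  assumes S: "finite S" and G: "G \<subseteq> Pow S" and "1 \<le> j" "2 * j \<le> card S"
    and Sperner: "trace_Sperner_on S j j G"
  shows "real (card G) \<le> (8 * real j + 8 * real j * real j) * 2 ^ card S / real (card S)"
proof -
  define n where "n = card S"
  define B where "B = (2 * real j + 2 * real j * real j) / real n * 2 ^ Suc n"
  define Gc where "Gc = (\<lambda>A. S - A) ` G"
  have "finite G" using G S by (meson finite_Pow_iff finite_subset)
  have lower: "real (card {A\<in>G. 2 * card A \<le> n}) \<le> B"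
    unfolding B_def n_def by (rule card_lower_half_le[OF S G assms(3,4) Sperner])
  have "inj_on (\<lambda>A. S - A) {A\<in>G. \<not> 2 * card A \<le> n}" using G by (auto intro!: inj_onI)
  moreover have "(\<lambda>A. S - A) ` {A\<in>G. \<not> 2 * card A \<le> n} \<subseteq> {A\<in>Gc. 2 * card A \<le> n}"
    using G S unfolding Gc_def n_def by (auto simp: card_Diff_subset finite_subset)
  ultimately have "card {A\<in>G. \<not> 2 * card A \<le> n} \<le> card {A\<in>Gc. 2 * card A \<le> n}"
    using \<open>finite G\<close> unfolding Gc_def by (intro card_inj_on_le) auto
  also have "real (card {A\<in>Gc. 2 * card A \<le> n}) \<le> B"
    unfolding B_def n_def Gc_def
    by (rule card_lower_half_le[OF S _ assms(3,4) trace_Sperner_on_complements[OF Sperner]]) blast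
  finally have upper: "real (card {A\<in>G. \<not> 2 * card A \<le> n}) \<le> B" by simp
  have "card G = card ({A\<in>G. 2 * card A \<le> n} \<union> {A\<in>G. \<not> 2 * card A \<le> n})"
    by (rule arg_cong[where f = card]) blast
  also have "\<dots> = card {A\<in>G. 2 * card A \<le> n} + card {A\<in>G. \<not> 2 * card A \<le> n}"
    by (rule card_Un_disjoint) (use \<open>finite G\<close> in auto)
  finally have "real (card G) \<le> 2 * B" using lower upper by simp
  also have "\<dots> = (8 * real j + 8 * real j * real j) * 2 ^ card S / real (card S)"
    unfolding B_def n_def by (simp add: field_simps)
  finally show ?thesis .
qed

section \<open>The central binomial coefficient\<close>

abbreviation central_binomial :: "nat \<Rightarrow> nat" where
  "central_binomial n \<equiv> n choose (n div 2)"

lemma Suc_mult_binomial_odd_central: "Suc a * (Suc (2 * a) choose a) = Suc (2 * a) * (2 * a choose a)"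
proof -
  have "Suc a * (Suc (2 * a) choose Suc a) = Suc (2 * a) * (2 * a choose a)"
    by (rule Suc_times_binomial)
  moreover have "Suc (2 * a) choose Suc a = Suc (2 * a) choose a"
    using binomial_symmetric[of "Suc a" "Suc (2 * a)"] by simp
  ultimately show ?thesis by simp
qed

lemma binomial_even_central_eq_double: "(Suc (Suc (2 * a)) choose Suc a) = 2 * (Suc (2 * a) choose a)"
proof -
  have "Suc a * (Suc (Suc (2 * a)) choose Suc a) = Suc (Suc (2 * a)) * (Suc (2 * a) choose a)"
    by (rule Suc_times_binomial)
  then have "Suc a * (Suc (Suc (2 * a)) choose Suc a) = Suc a * (2 * (Suc (2 * a) choose a))"
    by simp
  then show ?thesis by (simp only: mult_cancel1) simp
qed

lemma central_binomial_Suc_ge: "2 * Suc n * central_binomial n \<le> (n + 2) * central_binomial (Suc n)"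
proof (cases "even n")
  case True
  then obtain a where a: "n = 2 * a" by (auto elim: evenE)
  have m1: "central_binomial n = 2 * a choose a" using a by simp
  have m2: "central_binomial (Suc n) = Suc (2 * a) choose a" using a by simp
  have "2 * Suc n * central_binomial n = 2 * (Suc (2 * a) * (2 * a choose a))" unfolding m1 a
    by simp
  also have "\<dots> = 2 * (Suc a * (Suc (2 * a) choose a))" unfolding Suc_mult_binomial_odd_central ..
  also have "\<dots> = (n + 2) * central_binomial (Suc n)" unfolding m2 a by simp
  finally show ?thesis by simp
next
  case False
  then obtain a where "n = 2 * a + 1" by (auto elim: oddE)
  then have a: "n = Suc (2 * a)" by simp
  have m1: "central_binomial n = Suc (2 * a) choose a" using a by simp
  have m2: "central_binomial (Suc n) = Suc (Suc (2 * a)) choose Suc a"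
    using a by (simp del: binomial_Suc_Suc)
  have "central_binomial (Suc n) = 2 * central_binomial n" unfolding m1 m2
    by (rule binomial_even_central_eq_double)
  then show ?thesis by simp
qed

lemma sixteen_pow_le_central_binomial_sq: "1 \<le> a \<Longrightarrow> 16 ^ a \<le> 4 * a * (2 * a choose a) ^ 2"
proof (induction a rule: dec_induct)
  case base
  then show ?case by (simp add: numeral_eq_Suc)
next
  case (step a)
  define b where "b = 2 * a choose a"
  define b' where "b' = 2 * Suc a choose Suc a"
  have r1: "Suc a * (Suc (2 * a) choose a) = Suc (2 * a) * b" unfolding b_def
    by (rule Suc_mult_binomial_odd_central)
  have r2: "b' = 2 * (Suc (2 * a) choose a)" unfolding b'_def
    using binomial_even_central_eq_double[of a] by simp
  have r3: "Suc a * b' = 2 * Suc (2 * a) * b" using r1 r2 by simp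
  have "Suc a * (4 * Suc a * b' ^ 2) = 4 * (Suc a * b') ^ 2"
    by (simp add: power2_eq_square algebra_simps)
  also have "\<dots> = 16 * (Suc (2 * a)) ^ 2 * b ^ 2" unfolding r3
    by (simp add: power2_eq_square algebra_simps)
  also have "\<dots> \<ge> 16 * (4 * a * Suc a) * b ^ 2"
  proof -
    have "4 * a * Suc a \<le> (Suc (2 * a)) ^ 2" by (simp add: power2_eq_square)
    then show ?thesis by simp
  qed
  finally have "Suc a * (4 * Suc a * b' ^ 2) \<ge> Suc a * (16 * (4 * a * b ^ 2))"
    by (simp add: algebra_simps)
  then have "4 * Suc a * b' ^ 2 \<ge> 16 * (4 * a * b ^ 2)" by (simp only: Suc_mult_le_cancel1)
  moreover have "16 * 16 ^ a \<le> 16 * (4 * a * b ^ 2)" using step.IH unfolding b_def by simp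
  ultimately show ?case unfolding b'_def by simp
qed

lemma four_pow_le_central_binomial_sq: "1 \<le> n \<Longrightarrow> 4 ^ n \<le> 8 * n * (central_binomial n) ^ 2"
proof (cases "even n")
  case True
  assume n1: "1 \<le> n"
  then obtain a where a: "n = 2 * a" using True by (auto elim: evenE)
  then have "1 \<le> a" using n1 by simp
  have "4 ^ n = (16::nat) ^ a" unfolding a by (simp add: power_mult)
  also have "\<dots> \<le> 4 * a * (2 * a choose a) ^ 2"
    by (rule sixteen_pow_le_central_binomial_sq[OF \<open>1 \<le> a\<close>])
  also have "\<dots> \<le> 8 * n * (central_binomial n) ^ 2" using a by simp
  finally show ?thesis .
next
  case False
  assume n1: "1 \<le> n"
  then obtain a' where "n = 2 * a' + 1" using False by (auto elim: oddE)
  then obtain a where a: "n = Suc (2 * a)" by simp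
  have m1: "central_binomial n = Suc (2 * a) choose a" using a by simp
  have ge: "2 * a choose a \<le> central_binomial n"
  proof -
    have "Suc a * (Suc (2 * a) choose a) = Suc (2 * a) * (2 * a choose a)"
      by (rule Suc_mult_binomial_odd_central)
    moreover have "Suc a * (2 * a choose a) \<le> Suc (2 * a) * (2 * a choose a)"
      by (rule mult_le_mono1) simp
    ultimately have "Suc a * (2 * a choose a) \<le> Suc a * (Suc (2 * a) choose a)" by simp
    then show ?thesis unfolding m1 by (simp only: Suc_mult_le_cancel1)
  qed
  show ?thesis
  proof (cases "a = 0")
    case True
    then show ?thesis using a by simp
  next
    case False
    then have "1 \<le> a" by simp
    have "4 ^ n = 4 * (16::nat) ^ a" unfolding a by (simp add: power_mult)
    also have "\<dots> \<le> 4 * (4 * a * (2 * a choose a) ^ 2)"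
      using sixteen_pow_le_central_binomial_sq[OF \<open>1 \<le> a\<close>] by simp
    also have "\<dots> \<le> 4 * (4 * a * (central_binomial n) ^ 2)" using ge by (simp add: power_mono)
    also have "\<dots> \<le> 8 * n * (central_binomial n) ^ 2" using a by simp
    finally show ?thesis .
  qed
qed

lemma pow2_div_le_pow2_div_Suc:
  assumes "2 \<le> n"
  shows "(2::real) ^ (n - 1) / real (n - 1) \<le> 2 ^ n / real n"
proof -
  obtain m where m: "n = Suc m" using assms by (cases n) auto
  have m1: "1 \<le> m" using assms m by simp
  have "real (Suc m) \<le> 2 * real m" using m1 by simp
  then have "(2::real) ^ m * real (Suc m) \<le> 2 ^ m * (2 * real m)" by (rule mult_left_mono) simp
  then have "(2::real) ^ m * real (Suc m) \<le> 2 ^ Suc m * real m" by simp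
  then show ?thesis unfolding m using m1 by (simp add: divide_simps)
qed

lemma two_mult_central_binomial_le:
  assumes "2 \<le> n"
  shows "2 * real (central_binomial (n - 1)) \<le> real (central_binomial n) + 2 ^ n / real n"
proof -
  obtain m where m: "n = Suc m" using assms by (cases n) auto
  have "2 * Suc m * central_binomial m \<le> (m + 2) * central_binomial (Suc m)"
    by (rule central_binomial_Suc_ge)
  then have "real (2 * Suc m * central_binomial m) \<le> real ((m + 2) * central_binomial (Suc m))"
    by (simp only: of_nat_le_iff)
  then have a: "2 * real (Suc m) * real (central_binomial m) \<le> (real (Suc m) + 1) * real (central_binomial (Suc m))" by (simp add: algebra_simps)
  have n0: "real (Suc m) > 0" by simp
  have "2 * real (central_binomial m) \<le> (real (Suc m) + 1) * real (central_binomial (Suc m)) / real (Suc m)"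
    using a n0 by (simp add: pos_le_divide_eq algebra_simps)
  also have "\<dots> = real (central_binomial (Suc m)) + real (central_binomial (Suc m)) / real (Suc m)"
    using n0 by (simp add: field_simps)
  also have "\<dots> \<le> real (central_binomial (Suc m)) + 2 ^ Suc m / real (Suc m)"
  proof -
    have "central_binomial (Suc m) \<le> 2 ^ Suc m" by (rule binomial_le_pow2)
    then have "real (central_binomial (Suc m)) \<le> 2 ^ Suc m"
      by (metis of_nat_le_iff of_nat_numeral of_nat_power)
    then show ?thesis using n0 by (simp add: divide_right_mono)
  qed
  finally show ?thesis unfolding m by simp
qed

lemma pow2_div_le_eps_central_binomial:
  fixes C \<epsilon> :: real
  assumes C0: "C \<ge> 0" and e0: "\<epsilon> > 0" and n1: "1 \<le> n" and big: "8 * C ^ 2 \<le> \<epsilon> ^ 2 * real n"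
  shows "C * 2 ^ n / real n \<le> \<epsilon> * real (central_binomial n)"
proof -
  have n0: "real n > 0" using n1 by simp
  have "4 ^ n \<le> 8 * n * (central_binomial n) ^ 2" by (rule four_pow_le_central_binomial_sq[OF n1])
  then have "real (4 ^ n) \<le> real (8 * n * (central_binomial n) ^ 2)" by (simp only: of_nat_le_iff)
  then have p4: "(4::real) ^ n \<le> 8 * real n * real (central_binomial n) ^ 2" by simp
  have sq: "((2::real) ^ n) ^ 2 = 4 ^ n"
    by (simp add: power2_eq_square power_mult_distrib[symmetric])
  have "(C * 2 ^ n / real n) ^ 2 = C ^ 2 * 4 ^ n / real n ^ 2"
    by (simp add: power_divide power_mult_distrib sq)
  also have "\<dots> \<le> C ^ 2 * (8 * real n * real (central_binomial n) ^ 2) / real n ^ 2"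
    by (rule divide_right_mono[OF mult_left_mono[OF p4]]) simp_all
  also have "\<dots> = (8 * C ^ 2) * real (central_binomial n) ^ 2 / real n"
    using n0 by (simp add: power2_eq_square field_simps)
  also have "\<dots> \<le> (\<epsilon> ^ 2 * real n) * real (central_binomial n) ^ 2 / real n"
    by (rule divide_right_mono[OF mult_right_mono[OF big]]) simp_all
  also have "\<dots> = (\<epsilon> * real (central_binomial n)) ^ 2"
    using n0 by (simp add: power_mult_distrib)
  finally have "(C * 2 ^ n / real n) ^ 2 \<le> (\<epsilon> * real (central_binomial n)) ^ 2" .
  moreover have "0 \<le> \<epsilon> * real (central_binomial n)" using e0 by simp
  ultimately show ?thesis by (rule power2_le_imp_le)
qed

text \<open>The error terms below are of the form \<open>C 2\<^sup>n / n\<close>, which is negligible against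
  \<open>binom n (n div 2) \<ge> 2\<^sup>n / sqrt (8 n)\<close>.\<close>
lemma eventually_pow2_div_le_central_binomial:
  fixes C \<epsilon> :: real
  assumes "C \<ge> 0" "\<epsilon> > 0"
  shows "\<exists>N. \<forall>n\<ge>N. C * 2 ^ n / real n \<le> \<epsilon> * real (central_binomial n)"
proof (intro exI allI impI)
  fix n assume n: "max 1 (nat \<lceil>8 * C ^ 2 / \<epsilon> ^ 2\<rceil>) \<le> n"
  then have "8 * C ^ 2 / \<epsilon> ^ 2 \<le> real n" by linarith
  then have "8 * C ^ 2 \<le> \<epsilon> ^ 2 * real n" using assms(2) by (simp add: pos_divide_le_eq mult.commute)
  then show "C * 2 ^ n / real n \<le> \<epsilon> * real (central_binomial n)"
    using n assms by (intro pow2_div_le_eps_central_binomial) auto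
qed

section \<open>The induction on the codimension\<close>

definition trace_Sperner_bound :: "nat \<Rightarrow> nat \<Rightarrow> bool" where
  "trace_Sperner_bound l k \<longleftrightarrow> (\<exists>C\<ge>0. \<exists>N. \<forall>(S::nat set) F.
     finite S \<and> N \<le> card S \<and> F \<subseteq> Pow S \<and> trace_Sperner_on S l k F \<longrightarrow>
     real (card F) \<le> (real k - real l) * real (central_binomial (card S)) + C * 2 ^ card S / real (card S))"

lemma trace_Sperner_bound_0: "trace_Sperner_bound 0 k"
  unfolding trace_Sperner_bound_def
  by (intro exI[of _ 0] exI[of _ 0]) (auto dest: card_le_of_trace_Sperner_on_0)

lemma trace_Sperner_bound_diag:
  assumes "1 \<le> j"
  shows "trace_Sperner_bound j j"
  unfolding trace_Sperner_bound_def
  by (intro exI[of _ "8 * real j + 8 * real j * real j"] conjI exI[of _ "2 * j"])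
    (use card_le_of_trace_Sperner_on_diag assms in auto)

lemma central_binomial_recursion_le:
  fixes a C1 C2 x y :: real
  assumes "2 \<le> n" "0 \<le> a" "0 \<le> C1" "0 \<le> C2"
    and "x \<le> (a + 1) * real (central_binomial (n - 1)) + C1 * 2 ^ (n - 1) / real (n - 1)"
    and "y \<le> (a - 1) * real (central_binomial (n - 1)) + C2 * 2 ^ (n - 1) / real (n - 1)"
  shows "x + y \<le> a * real (central_binomial n) + (C1 + C2 + a) * 2 ^ n / real n"
proof -
  define u where "u = (2::real) ^ n / real n"
  define v where "v = (2::real) ^ (n - 1) / real (n - 1)"
  define M where "M = real (central_binomial n)"
  define M' where "M' = real (central_binomial (n - 1))"
  have x: "x \<le> a * M' + M' + C1 * v"
    using assms(5) unfolding v_def M'_def by (simp add: algebra_simps)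
  have y: "y \<le> a * M' - M' + C2 * v"
    using assms(6) unfolding v_def M'_def by (simp add: algebra_simps)
  have "v \<le> u" unfolding u_def v_def by (rule pow2_div_le_pow2_div_Suc[OF assms(1)])
  then have "C1 * v \<le> C1 * u" "C2 * v \<le> C2 * u" using assms(3,4) by (simp_all add: mult_left_mono)
  moreover have "a * (2 * M') \<le> a * (M + u)"
    using two_mult_central_binomial_le[OF assms(1)] assms(2) unfolding u_def M_def M'_def
    by (intro mult_left_mono)
  ultimately have "x + y \<le> a * M + C1 * u + C2 * u + a * u"
    using x y by (simp add: algebra_simps)
  then show ?thesis unfolding u_def M_def by (simp add: algebra_simps add_divide_distrib)
qed

lemma trace_Sperner_bound_step:
  assumes "1 \<le> l" "l < k" "trace_Sperner_bound (l - 1) k" "trace_Sperner_bound l (k - 1)"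
  shows "trace_Sperner_bound l k"
proof -
  obtain C1 N1 where "C1 \<ge> 0" and bound1: "\<forall>(S::nat set) F. finite S \<and> N1 \<le> card S \<and>
      F \<subseteq> Pow S \<and> trace_Sperner_on S (l - 1) k F \<longrightarrow> real (card F)
        \<le> (real k - real (l - 1)) * real (central_binomial (card S)) + C1 * 2 ^ card S / real (card S)"
    using assms(3) unfolding trace_Sperner_bound_def by blast
  obtain C2 N2 where "C2 \<ge> 0" and bound2: "\<forall>(S::nat set) F. finite S \<and> N2 \<le> card S \<and>
      F \<subseteq> Pow S \<and> trace_Sperner_on S l (k - 1) F \<longrightarrow> real (card F)
        \<le> (real (k - 1) - real l) * real (central_binomial (card S)) + C2 * 2 ^ card S / real (card S)"
    using assms(4) unfolding trace_Sperner_bound_def by blast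
  show ?thesis
    unfolding trace_Sperner_bound_def
  proof (intro exI[of _ "C1 + C2 + (real k - real l)"] conjI exI[of _ "N1 + N2 + l + 2"] allI impI)
    show "0 \<le> C1 + C2 + (real k - real l)" using \<open>C1 \<ge> 0\<close> \<open>C2 \<ge> 0\<close> assms(2) by simp
    fix S :: "nat set" and F
    assume "finite S \<and> N1 + N2 + l + 2 \<le> card S \<and> F \<subseteq> Pow S \<and> trace_Sperner_on S l k F"
    then have S: "finite S" "N1 + N2 + l + 2 \<le> card S" and F: "F \<subseteq> Pow S"
      and Sperner: "trace_Sperner_on S l k F" by auto
    then obtain x where "x \<in> S" by fastforce
    have card: "card (S - {x}) = card S - 1" using S \<open>x \<in> S\<close> by simp
    have "finite F" using S F by (meson finite_Pow_iff finite_subset)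
    have "real (card ((\<lambda>A. A - {x}) ` F)) \<le> (real k - real (l - 1))
        * real (central_binomial (card (S - {x}))) + C1 * 2 ^ card (S - {x}) / real (card (S - {x}))"
      using S F trace_Sperner_on_remove_point[OF S(1) \<open>x \<in> S\<close> assms(1) Sperner] card
      by (intro bound1[rule_format]) auto
    then have projection: "real (card ((\<lambda>A. A - {x}) ` F)) \<le> (real k - real l + 1)
        * real (central_binomial (card S - 1)) + C1 * 2 ^ (card S - 1) / real (card S - 1)"
      unfolding card using assms(1) by (simp add: of_nat_diff algebra_simps)
    have "real (card {B\<in>F. x \<notin> B \<and> insert x B \<in> F}) \<le> (real (k - 1) - real l)
        * real (central_binomial (card (S - {x}))) + C2 * 2 ^ card (S - {x}) / real (card (S - {x}))"
      using S F trace_Sperner_on_twins[OF S(1) \<open>x \<in> S\<close> _ _ Sperner] card assms(2)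
      by (intro bound2[rule_format]) auto
    then have twins: "real (card {B\<in>F. x \<notin> B \<and> insert x B \<in> F}) \<le> (real k - real l - 1)
        * real (central_binomial (card S - 1)) + C2 * 2 ^ (card S - 1) / real (card S - 1)"
      unfolding card using assms(2) by (simp add: of_nat_diff algebra_simps)
    from projection twins
    have "real (card ((\<lambda>A. A - {x}) ` F)) + real (card {B\<in>F. x \<notin> B \<and> insert x B \<in> F})
        \<le> (real k - real l) * real (central_binomial (card S))
          + (C1 + C2 + (real k - real l)) * 2 ^ card S / real (card S)"
      using S(2) \<open>C1 \<ge> 0\<close> \<open>C2 \<ge> 0\<close> assms(2) by (intro central_binomial_recursion_le) auto
    moreover have "card F \<le> card ((\<lambda>A. A - {x}) ` F) + card {B\<in>F. x \<notin> B \<and> insert x B \<in> F}"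
      by (rule card_le_card_remove_point_plus_twins[OF \<open>finite F\<close>])
    then have "real (card F)
        \<le> real (card ((\<lambda>A. A - {x}) ` F)) + real (card {B\<in>F. x \<notin> B \<and> insert x B \<in> F})"
      by (simp only: of_nat_add[symmetric] of_nat_le_iff)
    ultimately show "real (card F) \<le> (real k - real l) * real (central_binomial (card S))
        + (C1 + C2 + (real k - real l)) * 2 ^ card S / real (card S)"
      by (rule order_trans[rotated])
  qed
qed

lemma trace_Sperner_bound: "l \<le> k \<Longrightarrow> trace_Sperner_bound l k"
proof (induction "l + k" arbitrary: l k rule: less_induct)
  case less
  consider "l = 0" | "1 \<le> l" "l = k" | "1 \<le> l" "l < k" using less.prems by linarith
  then show ?case
  proof cases
    case 1
    then show ?thesis by (simp add: trace_Sperner_bound_0)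
  next
    case 2
    then show ?thesis using trace_Sperner_bound_diag by blast
  next
    case 3
    have "trace_Sperner_bound (l - 1) k" "trace_Sperner_bound l (k - 1)"
      using 3 by (auto intro!: less.hyps)
    with 3 show ?thesis by (rule trace_Sperner_bound_step)
  qed
qed

theorem theorem1p2:
  fixes k l' :: nat
  assumes "0 < l'" and "l' < k"
  shows "\<forall>\<epsilon>>(0::real). \<exists>N. \<forall>n\<ge>N. \<forall>\<F>.
           \<F> \<subseteq> Pow {1..n} \<and> trace_k_Sperner n (n - l') k \<F> \<longrightarrow>
           real (card \<F>) \<le> (real k - real l' + \<epsilon>) * real (n choose (n div 2))"
proof (intro allI impI)
  fix \<epsilon> :: real assume "\<epsilon> > 0"
  obtain C N0 where "C \<ge> 0" and bound: "\<forall>(S::nat set) F. finite S \<and> N0 \<le> card S \<and>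
      F \<subseteq> Pow S \<and> trace_Sperner_on S l' k F \<longrightarrow> real (card F)
        \<le> (real k - real l') * real (central_binomial (card S)) + C * 2 ^ card S / real (card S)"
    using trace_Sperner_bound[of l' k] assms(2) unfolding trace_Sperner_bound_def by auto
  obtain N1 where error: "\<And>n. n \<ge> N1 \<Longrightarrow> C * 2 ^ n / real n \<le> \<epsilon> * real (central_binomial n)"
    using eventually_pow2_div_le_central_binomial[OF \<open>C \<ge> 0\<close> \<open>\<epsilon> > 0\<close>] by blast
  show "\<exists>N. \<forall>n\<ge>N. \<forall>\<F>. \<F> \<subseteq> Pow {1..n} \<and> trace_k_Sperner n (n - l') k \<F> \<longrightarrow>
      real (card \<F>) \<le> (real k - real l' + \<epsilon>) * real (n choose (n div 2))"
  proof (intro exI[of _ "max N0 N1"] allI impI)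
    fix n F assume "max N0 N1 \<le> n" and F: "F \<subseteq> Pow {1..n} \<and> trace_k_Sperner n (n - l') k F"
    then have "trace_Sperner_on {1..n} l' k F"
      unfolding trace_Sperner_on_def trace_k_Sperner_def by simp
    then have "real (card F) \<le> (real k - real l') * real (central_binomial n) + C * 2 ^ n / real n"
      using bound[rule_format, of "{1..n}" F] F \<open>max N0 N1 \<le> n\<close> by simp
    then show "real (card F) \<le> (real k - real l' + \<epsilon>) * real (n choose (n div 2))"
      using error[of n] \<open>max N0 N1 \<le> n\<close> by (simp add: algebra_simps)
  qed
qed

end
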